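(* Let $P$ be a probability measure on a measurable space $(\Omega,\mathcal{M})$. Let $\Lambda:[0,\infty)\to[0,\infty]$ satisfy $\Lambda(0)=0$, be finite on a neighborhood of $0$, and be differentiable from the right at $0$ with right-derivative $\eta$. Then $$\mathcal{U}^\Lambda(P)\subset\{Q:\ R(Q\|P)\le\eta\}.$$
   Context: For probability measures $P,Q$ on $(\Omega,\mathcal{M})$, the relative entropy is $R(Q\|P)=\int\log(dQ/dP)\,dQ$ if $Q\ll P$ and $+\infty$ otherwise. For a probability measure $Q$ and a measurable $f:\Omega\to\overline{\mathbb{R}}$, the cumulant generating function is $\Lambda_Q^f(\lambda)=\log E_Q[e^{\lambda f}]$. For $\Lambda:[0,\infty)\to[0,\infty]$ with $\Lambda(0)=0$ and finite on a neighborhood of $0$, the ambiguity set is $\mathcal{U}^\Lambda(P)=\{Q \text{ probability measure}: Q\ll P,\ \Lambda_Q^{\log(dQ/dP)}(\lambda)\le\Lambda(\lambda)\ \text{for all }\lambda>0\}$. *)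

theory Defs
  imports "HOL-Probability.Probability"
begin

definition exp_ereal :: "ereal \<Rightarrow> ennreal" where
  "exp_ereal t = (case t of ereal r \<Rightarrow> ennreal (exp r) | PInfty \<Rightarrow> \<infinity> | MInfty \<Rightarrow> 0)"

definition ln_ennreal :: "ennreal \<Rightarrow> ereal" where
  "ln_ennreal e = (if e = 0 then -\<infinity> else if e = \<infinity> then \<infinity> else ereal (ln (enn2real e)))"

definition cgf :: "'a measure \<Rightarrow> ('a \<Rightarrow> ereal) \<Rightarrow> real \<Rightarrow> ereal" where
  "cgf Q f l = ln_ennreal (\<integral>\<^sup>+ x. exp_ereal (ereal l * f x) \<partial>Q)"

definition log_RN :: "'a measure \<Rightarrow> 'a measure \<Rightarrow> 'a \<Rightarrow> ereal" where
  "log_RN P Q x = ln_ennreal (RN_deriv P Q x)"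

definition abs_cont :: "'a measure \<Rightarrow> 'a measure \<Rightarrow> bool" where
  "abs_cont Q P \<longleftrightarrow> sets Q = sets P \<and> absolutely_continuous P Q"

text \<open>Relative entropy R(Q||P) = int log(dQ/dP) dQ if Q << P, +inf otherwise
  (integral of an extended-real function = positive part minus negative part).\<close>
definition rel_entropy :: "'a measure \<Rightarrow> 'a measure \<Rightarrow> ereal" where
  "rel_entropy Q P =
     (if abs_cont Q P then
        enn2ereal (\<integral>\<^sup>+ x. e2ennreal (max 0 (log_RN P Q x)) \<partial>Q)
        - enn2ereal (\<integral>\<^sup>+ x. e2ennreal (max 0 (- log_RN P Q x)) \<partial>Q)
      else \<infinity>)"

definition ambiguity_set :: "'a measure \<Rightarrow> (real \<Rightarrow> ennreal) \<Rightarrow> 'a measure set" where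
  "ambiguity_set P \<Lambda> = {Q. prob_space Q \<and> abs_cont Q P \<and>
      (\<forall>l>0. cgf Q (log_RN P Q) l \<le> enn2ereal (\<Lambda> l))}"

end

theory Submission imports Defs begin

(* Write f = log (dQ/dP) and split its Q-integral into positive and negative parts A and B.
   The negative part is harmless: B = int p (ln p)^- dP <= 1 because p (ln p)^- <= 1 pointwise.
   From exp x >= 1 + x one gets 1 + l A <= E_Q[exp (l f)] + l B <= exp (Lambda l) + l B for all l > 0,
   so A is finite and R(Q||P) = A - B <= (exp (Lambda l) - 1) / l.  As l -> 0+ the right-hand side
   tends to the right derivative of exp o Lambda at 0, which is eta because Lambda 0 = 0. *)

lemma ln_ennreal_measurable[measurable]: "ln_ennreal \<in> borel \<rightarrow>\<^sub>M borel"
  unfolding ln_ennreal_def[abs_def] by measurable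

lemma exp_ereal_eq:
  "exp_ereal t = (if t = \<infinity> then \<infinity> else if t = -\<infinity> then 0 else ennreal (exp (real_of_ereal t)))"
  by (cases t) (auto simp: exp_ereal_def)

lemma exp_ereal_measurable[measurable]: "exp_ereal \<in> borel \<rightarrow>\<^sub>M borel"
  unfolding exp_ereal_eq[abs_def] by measurable

lemma ennreal_mult_neg_part_ln_le_1: "p * e2ennreal (max 0 (- ln_ennreal p)) \<le> 1"
proof (cases "p = 0 \<or> p = \<infinity>")
  case True
  then show ?thesis by (auto simp: ln_ennreal_def)
next
  case False
  then obtain r where r: "p = ennreal r" "r > 0"
    by (cases p) (auto simp: less_le)
  have ln_p: "ln_ennreal p = ereal (ln r)" using r False by (simp add: ln_ennreal_def)
  show ?thesis
  proof (cases "r \<le> 1")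
    case True
    have "ln (1/r) \<le> 1/r - 1" using r by (intro ln_le_minus_one) auto
    then have "r * (- ln r) \<le> 1" using r by (simp add: ln_div field_simps)
    moreover have "- ln r \<ge> 0" using True r by simp
    ultimately show ?thesis using r ln_p
      by (simp add: e2ennreal_ereal ennreal_mult'[symmetric] max_def ennreal_le_1)
  next
    case False
    then have "ln r > 0" by simp
    then show ?thesis using ln_p by (simp add: max_def e2ennreal_neg)
  qed
qed

lemma one_add_pos_part_le_exp_ereal:
  assumes "l > 0"
  shows "1 + ennreal l * e2ennreal (max 0 t)
           \<le> exp_ereal (ereal l * t) + ennreal l * e2ennreal (max 0 (- t))"
proof (cases t)
  case (real r)
  have exp_ge: "1 + l * r \<le> exp (l * r)" using exp_ge_add_one_self[of "l * r"] by simp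
  show ?thesis
  proof (cases "r \<ge> 0")
    case True
    then have "1 + ennreal l * e2ennreal (max 0 t) = ennreal (1 + l * r)"
      using real assms
      by (simp add: e2ennreal_ereal max_def ennreal_mult' ennreal_plus[symmetric])
    also have "\<dots> \<le> exp_ereal (ereal l * t)" using exp_ge real by (simp add: exp_ereal_def)
    finally show ?thesis by (meson add_increasing2 order.trans zero_le)
  next
    case False
    have "ennreal 1 \<le> ennreal (exp (l * r) + l * (- r))"
      using exp_ge by (intro ennreal_leI) linarith
    also have "\<dots> = ennreal (exp (l * r)) + ennreal l * ennreal (- r)"
      using False assms
      by (subst ennreal_plus) (auto simp: ennreal_mult[symmetric] mult_nonneg_nonpos)
    also have "\<dots> = exp_ereal (ereal l * t) + ennreal l * e2ennreal (max 0 (- t))"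
      using real False assms by (simp add: exp_ereal_def e2ennreal_ereal max_def)
    finally show ?thesis using real False by (simp add: max_def e2ennreal_neg)
  qed
next
  case PInf
  then show ?thesis using assms by (simp add: exp_ereal_def)
next
  case MInf
  then show ?thesis using assms by (simp add: exp_ereal_def max_def ennreal_mult_top)
qed

lemma le_exp_if_ln_ennreal_le:
  assumes "ln_ennreal E \<le> ereal c"
  shows "E \<le> ennreal (exp c)"
proof -
  consider "E = 0" | "E = \<infinity>" | r where "E = ennreal r" "r > 0"
    by (cases E) (auto simp: less_le)
  then show ?thesis
  proof cases
    case 2
    then show ?thesis using assms by (simp add: ln_ennreal_def)
  next
    case (3 r)
    then have "ln r \<le> c" using assms by (simp add: ln_ennreal_def)
    then have "r \<le> exp c" using 3 by (metis exp_le_cancel_iff exp_ln)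
    then show ?thesis using 3 by simp
  qed simp
qed

lemma nn_integral_neg_part_log_RN_le_1:
  assumes "prob_space P" "abs_cont Q P"
  shows "(\<integral>\<^sup>+ x. e2ennreal (max 0 (- log_RN P Q x)) \<partial>Q) \<le> 1"
proof -
  have sets_Q: "sets Q = sets P" and ac: "absolutely_continuous P Q"
    using assms(2) by (auto simp: abs_cont_def)
  define p where "p = RN_deriv P Q"
  have [measurable]: "p \<in> borel_measurable P" unfolding p_def by simp
  have density_eq: "density P p = Q" unfolding p_def
    using sigma_finite_measure.density_RN_deriv[OF prob_space_imp_sigma_finite[OF assms(1)] ac sets_Q] .
  have "(\<integral>\<^sup>+ x. e2ennreal (max 0 (- log_RN P Q x)) \<partial>Q)
      = (\<integral>\<^sup>+ x. p x * e2ennreal (max 0 (- ln_ennreal (p x))) \<partial>P)"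
    using nn_integral_density[of p P "\<lambda>x. e2ennreal (max 0 (- ln_ennreal (p x)))"]
    unfolding density_eq by (simp add: log_RN_def p_def)
  also have "\<dots> \<le> (\<integral>\<^sup>+ x. 1 \<partial>P)"
    by (intro nn_integral_mono ennreal_mult_neg_part_ln_le_1)
  also have "\<dots> = 1" using prob_space.emeasure_space_1[OF assms(1)] by simp
  finally show ?thesis .
qed

lemma one_add_nn_integral_pos_part_le:
  assumes "prob_space Q" "f \<in> borel_measurable Q" "l > 0"
  shows "1 + ennreal l * (\<integral>\<^sup>+ x. e2ennreal (max 0 (f x)) \<partial>Q)
           \<le> (\<integral>\<^sup>+ x. exp_ereal (ereal l * f x) \<partial>Q) + ennreal l * (\<integral>\<^sup>+ x. e2ennreal (max 0 (- f x)) \<partial>Q)"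
proof -
  have "1 + ennreal l * (\<integral>\<^sup>+ x. e2ennreal (max 0 (f x)) \<partial>Q)
      = (\<integral>\<^sup>+ x. 1 + ennreal l * e2ennreal (max 0 (f x)) \<partial>Q)"
    using assms(2)
    by (subst nn_integral_add) (auto simp: nn_integral_cmult prob_space.emeasure_space_1[OF assms(1)])
  also have "\<dots> \<le> (\<integral>\<^sup>+ x. exp_ereal (ereal l * f x) + ennreal l * e2ennreal (max 0 (- f x)) \<partial>Q)"
    by (intro nn_integral_mono one_add_pos_part_le_exp_ereal assms(3))
  also have "\<dots> = (\<integral>\<^sup>+ x. exp_ereal (ereal l * f x) \<partial>Q) + ennreal l * (\<integral>\<^sup>+ x. e2ennreal (max 0 (- f x)) \<partial>Q)"
    using assms(2) by (subst nn_integral_add) (auto simp: nn_integral_cmult)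
  finally show ?thesis .
qed

lemma rel_entropy_le_of_cgf_le:
  assumes "prob_space P" "prob_space Q" "abs_cont Q P" "l > 0"
    and "cgf Q (log_RN P Q) l \<le> ereal c"
  shows "rel_entropy Q P \<le> ereal ((exp c - 1) / l)"
proof -
  define A where "A = (\<integral>\<^sup>+ x. e2ennreal (max 0 (log_RN P Q x)) \<partial>Q)"
  define B where "B = (\<integral>\<^sup>+ x. e2ennreal (max 0 (- log_RN P Q x)) \<partial>Q)"
  have "sets Q = sets P" using assms(3) by (simp add: abs_cont_def)
  then have "log_RN P Q \<in> borel_measurable Q"
    unfolding log_RN_def[abs_def] measurable_cong_sets[OF \<open>sets Q = sets P\<close> refl] by measurable
  then have "1 + ennreal l * A \<le> (\<integral>\<^sup>+ x. exp_ereal (ereal l * log_RN P Q x) \<partial>Q) + ennreal l * B"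
    unfolding A_def B_def by (rule one_add_nn_integral_pos_part_le[OF assms(2) _ assms(4)])
  also have "\<dots> \<le> ennreal (exp c) + ennreal l * B"
    using assms(5) unfolding cgf_def by (intro add_right_mono le_exp_if_ln_ennreal_le)
  finally have main: "1 + ennreal l * A \<le> ennreal (exp c) + ennreal l * B" .
  have "B \<le> 1" unfolding B_def by (rule nn_integral_neg_part_log_RN_le_1[OF assms(1,3)])
  then obtain b where b: "B = ennreal b" "b \<ge> 0" by (cases B) (auto simp: top_unique)
  have "1 + ennreal l * A < \<infinity>"
    using main by (rule le_less_trans) (simp add: b ennreal_mult_less_top)
  then have "A < \<infinity>" using assms(4) by (auto simp: ennreal_mult_less_top top.not_eq_extremum)
  then obtain a where a: "A = ennreal a" "a \<ge> 0" by (cases A) auto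
  have "ennreal (1 + l * a) \<le> ennreal (exp c + l * b)"
    using main a b assms(4) by (simp add: ennreal_mult' ennreal_plus[symmetric])
  then have "1 + l * a \<le> exp c + l * b"
    using b assms(4) by (subst (asm) ennreal_le_iff) (auto intro!: add_nonneg_nonneg)
  then have "a - b \<le> (exp c - 1) / l" using assms(4) by (simp add: field_simps)
  moreover have "rel_entropy Q P = ereal (a - b)"
    using assms(3) a b by (simp add: rel_entropy_def A_def[symmetric] B_def[symmetric])
  ultimately show ?thesis by simp
qed

theorem mainTheorem1:
  fixes P :: "'a measure" and \<Lambda> :: "real \<Rightarrow> ennreal" and \<eta> :: real
  assumes "prob_space P"
    and "\<Lambda> 0 = 0"
    and "\<exists>\<epsilon>>0. \<forall>t\<in>{0..<\<epsilon>}. \<Lambda> t < \<infinity>"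
    and "((\<lambda>t. enn2real (\<Lambda> t)) has_real_derivative \<eta>) (at_right 0)"
  shows "ambiguity_set P \<Lambda> \<subseteq> {Q. rel_entropy Q P \<le> ereal \<eta>}"
proof
  fix Q assume "Q \<in> ambiguity_set P \<Lambda>"
  then have Q: "prob_space Q" "abs_cont Q P"
    and cgf_le: "\<And>l. l > 0 \<Longrightarrow> cgf Q (log_RN P Q) l \<le> enn2ereal (\<Lambda> l)"
    by (auto simp: ambiguity_set_def)
  obtain \<epsilon> where "\<epsilon> > 0" and finite: "\<And>t. 0 \<le> t \<Longrightarrow> t < \<epsilon> \<Longrightarrow> \<Lambda> t < \<infinity>"
    using assms(3) by auto
  define g where "g t = exp (enn2real (\<Lambda> t))" for t
  have "(g has_real_derivative \<eta>) (at_right 0)"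
    unfolding g_def using DERIV_chain2[OF DERIV_exp assms(4)] assms(2) by simp
  then have "((\<lambda>t. ereal ((g t - 1) / t)) \<longlongrightarrow> ereal \<eta>) (at_right 0)"
    using assms(2) by (simp add: has_field_derivative_iff g_def)
  moreover have "\<forall>\<^sub>F t in at_right 0. rel_entropy Q P \<le> ereal ((g t - 1) / t)"
  proof (rule eventually_at_rightI)
    fix t :: real assume "t \<in> {0<..<\<epsilon>}"
    then have "0 < t" "t < \<epsilon>" by auto
    then have "enn2ereal (\<Lambda> t) = ereal (enn2real (\<Lambda> t))"
      using finite[of t] by (cases "\<Lambda> t") auto
    then show "rel_entropy Q P \<le> ereal ((g t - 1) / t)"
      using rel_entropy_le_of_cgf_le[OF assms(1) Q \<open>0 < t\<close>] cgf_le[OF \<open>0 < t\<close>]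
      by (simp add: g_def)
  qed (fact \<open>\<epsilon> > 0\<close>)
  ultimately have "rel_entropy Q P \<le> ereal \<eta>"
    using tendsto_lowerbound trivial_limit_at_right_real by blast
  then show "Q \<in> {Q. rel_entropy Q P \<le> ereal \<eta>}" by simp
qed

end
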